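(* Let $m\ge3$ be odd, $n\ge 2$, and let $\mathcal{A}$ be a real symmetric $m$th order $n$-dimensional tensor. If $\mathcal{A}$ is strongly positive semi-definite, then $\mathcal{A}$ is genuinely positive semi-definite. If furthermore $\mathcal{A}$ is strongly positive definite, then $\mathcal{A}$ is genuinely positive definite.
   Context: For $\mathbf{x}\in\mathbb{R}^n$, $\mathcal{A}\mathbf{x}^{m-1}$ is the vector with $i$th component $\sum_{i_2,\dots,i_m=1}^n a_{ii_2\dots i_m}x_{i_2}\cdots x_{i_m}$, and $\mathbf{x}^{[m-1]}=(x_i^{m-1})_i$. $\mathcal{A}$ is strongly positive semi-definite if $\mathcal{A}\mathbf{x}^{m-1}\ge\mathbf{0}$ componentwise for all $\mathbf{x}\in\mathbb{R}^n$, and strongly positive definite if $\mathcal{A}\mathbf{x}^{m-1}>\mathbf{0}$ componentwise for all nonzero $\mathbf{x}$. A real $\lambda$ is an H-eigenvalue of $\mathcal{A}$ if there is a nonzero $\mathbf{x}\in\mathbb{R}^n$ with $\mathcal{A}\mathbf{x}^{m-1}=\lambda\mathbf{x}^{[m-1]}$. A tensor is genuinely positive semi-definite (resp. genuinely positive definite) if its symmetrization (here $\mathcal{A}$ itself) has at least one H-eigenvalue and all its H-eigenvalues are nonnegative (resp. positive). *)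

theory Defs
  imports Complex_Main "HOL-Combinatorics.Permutations"
begin

text \<open>An m-th order tensor over the finite index type 'n (dimension n = CARD('n))
  is a function A from index lists to reals; only lists of length m are relevant:
  the entry a_{i_1 ... i_m} is A [i_1, ..., i_m].\<close>

definition symmetric_tensor :: "nat \<Rightarrow> ('n list \<Rightarrow> real) \<Rightarrow> bool" where
  "symmetric_tensor m A \<longleftrightarrow>
     (\<forall>is js. length is = m \<and> mset is = mset js \<longrightarrow> A is = A js)"

definition symmetrization :: "nat \<Rightarrow> ('n list \<Rightarrow> real) \<Rightarrow> ('n list \<Rightarrow> real)" where
  "symmetrization m A = (\<lambda>is.
     (\<Sum>p\<in>{p. p permutes {..<m}}. A (permute_list p is)) / fact m)"

definition tensor_apply :: "nat \<Rightarrow> ('n::finite list \<Rightarrow> real) \<Rightarrow> ('n \<Rightarrow> real) \<Rightarrow> 'n \<Rightarrow> real" where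
  "tensor_apply m A x i =
     (\<Sum>js\<in>{js. length js = m - 1}. A (i # js) * prod_list (map x js))"

definition strongly_psd :: "nat \<Rightarrow> ('n::finite list \<Rightarrow> real) \<Rightarrow> bool" where
  "strongly_psd m A \<longleftrightarrow> (\<forall>x i. tensor_apply m A x i \<ge> 0)"

definition strongly_pd :: "nat \<Rightarrow> ('n::finite list \<Rightarrow> real) \<Rightarrow> bool" where
  "strongly_pd m A \<longleftrightarrow> (\<forall>x. (\<exists>j. x j \<noteq> 0) \<longrightarrow> (\<forall>i. tensor_apply m A x i > 0))"

definition H_eigenvalue :: "nat \<Rightarrow> ('n::finite list \<Rightarrow> real) \<Rightarrow> real \<Rightarrow> bool" where
  "H_eigenvalue m A lam \<longleftrightarrow>
     (\<exists>x. (\<exists>j. x j \<noteq> 0) \<and> (\<forall>i. tensor_apply m A x i = lam * x i ^ (m - 1)))"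

definition genuinely_psd :: "nat \<Rightarrow> ('n::finite list \<Rightarrow> real) \<Rightarrow> bool" where
  "genuinely_psd m A \<longleftrightarrow>
     (let S = symmetrization m A in
       (\<exists>lam. H_eigenvalue m S lam) \<and> (\<forall>lam. H_eigenvalue m S lam \<longrightarrow> lam \<ge> 0))"

definition genuinely_pd :: "nat \<Rightarrow> ('n::finite list \<Rightarrow> real) \<Rightarrow> bool" where
  "genuinely_pd m A \<longleftrightarrow>
     (let S = symmetrization m A in
       (\<exists>lam. H_eigenvalue m S lam) \<and> (\<forall>lam. H_eigenvalue m S lam \<longrightarrow> lam > 0))"

end

theory Submission
  imports Defs "HOL-Analysis.Analysis"
begin

text \<open>
  For a symmetric tensor the symmetrization changes no entry a_{i_1...i_m}, so A and its
  symmetrization define the same map x \<mapsto> A x^(m-1). As m - 1 is even, x_j^(m-1) > 0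
  at any nonzero coordinate x_j of an H-eigenvector x, so the j-th eigen-equation
  (A x^(m-1))_j = \<lambda> x_j^(m-1) gives \<lambda> the sign of (A x^(m-1))_j.
  An H-eigenvalue exists because A v^(m-1) \<ge> 0 on the standard simplex: either it
  vanishes somewhere there (eigenvalue 0), or the componentwise (m-1)-th root of
  A v^(m-1), rescaled back onto the simplex, is a continuous self-map of the simplex,
  and a Brouwer fixed point of it is an eigenvector.
\<close>

definition unit_simplex :: "(real^'n::finite) set" where
  "unit_simplex = {v. (\<forall>i. 0 \<le> v $ i) \<and> (\<Sum>i\<in>UNIV. v $ i) = 1}"

lemma compact_unit_simplex: "compact (unit_simplex :: (real^'n::finite) set)"
proof (subst compact_eq_bounded_closed, intro conjI)
  show "bounded (unit_simplex :: (real^'n) set)"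
    unfolding bounded_iff
  proof (intro exI ballI)
    fix v :: "real^'n" assume v: "v \<in> unit_simplex"
    have "norm v \<le> (\<Sum>i\<in>UNIV. \<bar>v $ i\<bar>)" by (rule norm_le_l1_cart)
    also have "\<dots> = 1" using v by (simp add: unit_simplex_def)
    finally show "norm v \<le> 1" .
  qed
  have "unit_simplex = (\<Inter>i. {v::real^'n. 0 \<le> v $ i}) \<inter> {v. (\<Sum>i\<in>UNIV. v $ i) = 1}"
    by (auto simp: unit_simplex_def)
  also have "closed \<dots>"
    by (intro closed_Int closed_INT ballI closed_Collect_le closed_Collect_eq
        continuous_intros continuous_on_sum)
  finally show "closed (unit_simplex :: (real^'n) set)" .
qed

lemma convex_unit_simplex: "convex (unit_simplex :: (real^'n::finite) set)"
  unfolding convex_def unit_simplex_def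
  by (auto simp: sum.distrib sum_distrib_left[symmetric])

lemma unit_simplex_nonempty: "(unit_simplex :: (real^'n::finite) set) \<noteq> {}"
proof -
  have "(\<chi> i. 1 / real CARD('n)) \<in> (unit_simplex :: (real^'n) set)"
    by (simp add: unit_simplex_def)
  then show ?thesis by blast
qed

lemma unit_simplex_nonzero:
  assumes "v \<in> unit_simplex"
  obtains j where "v $ j \<noteq> 0"
  using assms by (force simp: unit_simplex_def)

lemma unit_simplex_power_eigenvector:
  fixes F :: "real^'n::finite \<Rightarrow> real^'n"
  assumes "k > 0" and contF: "continuous_on unit_simplex F"
    and F_nonneg: "\<And>v i. v \<in> unit_simplex \<Longrightarrow> 0 \<le> F v $ i"
  shows "\<exists>v\<in>unit_simplex. \<exists>\<mu>\<ge>0. \<forall>i. F v $ i = \<mu> * (v $ i) ^ k"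
proof (cases "\<exists>v\<in>unit_simplex. F v = 0")
  case True
  then show ?thesis by force
next
  case False
  define r where "r v = (\<chi> i. root k (F v $ i))" for v
  define s where "s v = (\<Sum>i\<in>UNIV. r v $ i)" for v
  have r_nonneg: "0 \<le> r v $ i" if "v \<in> unit_simplex" for v i
    using F_nonneg[OF that] by (simp add: r_def real_root_ge_zero)
  have s_pos: "0 < s v" if v: "v \<in> unit_simplex" for v
  proof -
    obtain i where "F v $ i \<noteq> 0"
      using False v by (metis vec_eq_iff zero_index)
    with F_nonneg[OF v, of i] \<open>k > 0\<close> have "0 < r v $ i"
      by (simp add: r_def)
    moreover have "r v $ i \<le> s v"
      unfolding s_def by (rule member_le_sum) (use r_nonneg v in auto)
    ultimately show ?thesis by linarith
  qed
  define g where "g v = (1 / s v) *\<^sub>R r v" for v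
  have cont_r: "continuous_on unit_simplex r"
    unfolding r_def
    by (intro continuous_on_vec_lambda continuous_intros continuous_on_compose2[OF contF]) auto
  have cont_s: "continuous_on unit_simplex s"
    unfolding s_def by (intro continuous_on_sum continuous_on_component cont_r)
  have "continuous_on unit_simplex g"
    unfolding g_def by (intro continuous_intros cont_r cont_s) (use s_pos in force)
  moreover have "g \<in> unit_simplex \<rightarrow> unit_simplex"
  proof
    fix v :: "real^'n" assume v: "v \<in> unit_simplex"
    have "(\<Sum>i\<in>UNIV. r v $ i / s v) = 1"
      using s_pos[OF v] by (simp add: sum_divide_distrib[symmetric] s_def)
    with r_nonneg[OF v] s_pos[OF v] show "g v \<in> unit_simplex"
      by (simp add: g_def unit_simplex_def)
  qed
  ultimately obtain v where v: "v \<in> unit_simplex" and fixpoint: "g v = v"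
    by (rule brouwer[OF compact_unit_simplex convex_unit_simplex unit_simplex_nonempty])
  have "F v $ i = s v ^ k * (v $ i) ^ k" for i
  proof -
    have "v $ i = g v $ i" using fixpoint by simp
    also have "\<dots> = r v $ i / s v" by (simp add: g_def)
    finally have "v $ i = r v $ i / s v" .
    moreover have "r v $ i ^ k = F v $ i"
      using F_nonneg[OF v, of i] \<open>k > 0\<close> by (simp add: r_def)
    ultimately show ?thesis
      using s_pos[OF v] by (simp add: power_divide)
  qed
  with v s_pos[OF v] show ?thesis by (intro bexI[of _ v] exI[of _ "s v ^ k"]) auto
qed

lemma continuous_on_tensor_apply:
  "continuous_on S (\<lambda>v::real^'n::finite. tensor_apply m A (($) v) i)"
proof -
  have "continuous_on S (\<lambda>v::real^'n. prod_list (map (($) v) js))" for js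
    by (induction js) (auto intro!: continuous_intros)
  then show ?thesis
    unfolding tensor_apply_def by (intro continuous_intros)
qed

lemma H_eigenvalue_exists:
  fixes A :: "'n::finite list \<Rightarrow> real"
  assumes "m \<ge> 2"
    and nonneg: "\<And>x i. (\<forall>j. 0 \<le> x j) \<Longrightarrow> 0 \<le> tensor_apply m A x i"
  shows "\<exists>lam. H_eigenvalue m A lam"
proof -
  have "continuous_on unit_simplex (\<lambda>v::real^'n. \<chi> i. tensor_apply m A (($) v) i)"
    by (intro continuous_on_vec_lambda continuous_on_tensor_apply)
  moreover have "0 \<le> (\<chi> i. tensor_apply m A (($) v) i) $ i" if "v \<in> unit_simplex" for v i
    using nonneg that by (simp add: unit_simplex_def)
  ultimately have "\<exists>v\<in>unit_simplex. \<exists>\<mu>\<ge>0.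
      \<forall>i. (\<chi> i. tensor_apply m A (($) v) i) $ i = \<mu> * (v $ i) ^ (m - 1)"
    using \<open>m \<ge> 2\<close> by (intro unit_simplex_power_eigenvector) auto
  then obtain v :: "real^'n" and \<mu> where v: "v \<in> unit_simplex"
    and eig: "\<forall>i. tensor_apply m A (($) v) i = \<mu> * (v $ i) ^ (m - 1)"
    by auto
  obtain j where "v $ j \<noteq> 0" using unit_simplex_nonzero[OF v] .
  with eig show ?thesis
    unfolding H_eigenvalue_def by (intro exI[of _ \<mu>] exI[of _ "($) v"]) auto
qed

lemma tensor_apply_zero:
  assumes "m \<ge> 2"
  shows "tensor_apply m A (\<lambda>_. 0) i = 0"
  unfolding tensor_apply_def
proof (intro sum.neutral ballI)
  fix js :: "'a list" assume "js \<in> {js. length js = m - 1}"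
  with assms show "A (i # js) * prod_list (map (\<lambda>_. 0::real) js) = 0"
    by (cases js) auto
qed

lemma strongly_pd_imp_strongly_psd:
  assumes "m \<ge> 2" and "strongly_pd m A"
  shows "strongly_psd m A"
  unfolding strongly_psd_def
proof (intro allI)
  fix x i
  show "0 \<le> tensor_apply m A x i"
  proof (cases "\<exists>j. x j \<noteq> 0")
    case True
    with assms(2) show ?thesis unfolding strongly_pd_def by (simp add: less_imp_le)
  next
    case False
    then have "x = (\<lambda>_. 0)" by auto
    then show ?thesis by (simp add: tensor_apply_zero[OF assms(1)])
  qed
qed

lemma H_eigenvalue_witness_coordinate:
  assumes "even (m - 1)" and "H_eigenvalue m A lam"
  obtains x j where "x j \<noteq> 0" and "0 < x j ^ (m - 1)" and "tensor_apply m A x j = lam * x j ^ (m - 1)"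
  using assms unfolding H_eigenvalue_def by (metis zero_less_power_eq)

lemma strongly_psd_H_eigenvalue_nonneg:
  assumes "even (m - 1)" and "strongly_psd m A" and "H_eigenvalue m A lam"
  shows "0 \<le> lam"
proof -
  obtain x j where "x j \<noteq> 0" and pos: "0 < x j ^ (m - 1)" and eq: "tensor_apply m A x j = lam * x j ^ (m - 1)"
    using H_eigenvalue_witness_coordinate[OF assms(1,3)] .
  have "0 \<le> lam * x j ^ (m - 1)"
    using assms(2) eq unfolding strongly_psd_def by metis
  with pos show ?thesis by (simp add: zero_le_mult_iff)
qed

lemma strongly_pd_H_eigenvalue_pos:
  assumes "even (m - 1)" and "strongly_pd m A" and "H_eigenvalue m A lam"
  shows "0 < lam"
proof -
  obtain x j where "x j \<noteq> 0" and pos: "0 < x j ^ (m - 1)" and eq: "tensor_apply m A x j = lam * x j ^ (m - 1)"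
    using H_eigenvalue_witness_coordinate[OF assms(1,3)] .
  have "0 < lam * x j ^ (m - 1)"
    using assms(2) \<open>x j \<noteq> 0\<close> eq unfolding strongly_pd_def by metis
  from this pos show ?thesis by (rule zero_less_mult_pos2)
qed

lemma symmetrization_eq_self:
  assumes "symmetric_tensor m A" and "length is = m"
  shows "symmetrization m A is = A is"
proof -
  have "A (permute_list p is) = A is" if "p permutes {..<m}" for p
    using assms that unfolding symmetric_tensor_def
    by (metis length_permute_list mset_permute_list)
  then have "(\<Sum>p\<in>{p. p permutes {..<m}}. A (permute_list p is)) = fact m * A is"
    using card_permutations[of "{..<m}" m] by simp
  then show ?thesis unfolding symmetrization_def by simp
qed

lemma tensor_apply_symmetrization:
  assumes "symmetric_tensor m A" and "m \<ge> 1"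
  shows "tensor_apply m (symmetrization m A) = tensor_apply m A"
  unfolding tensor_apply_def
  using assms by (intro ext sum.cong refl) (simp add: symmetrization_eq_self)

theorem theorem3p3:
  fixes m :: nat and A :: "'n::finite list \<Rightarrow> real"
  assumes "odd m" and "m \<ge> 3" and "card (UNIV :: 'n set) \<ge> 2"
    and "symmetric_tensor m A"
  shows "(strongly_psd m A \<longrightarrow> genuinely_psd m A)
       \<and> (strongly_pd m A \<longrightarrow> genuinely_pd m A)"
proof -
  let ?S = "symmetrization m A"
  have "tensor_apply m ?S = tensor_apply m A"
    using tensor_apply_symmetrization[OF assms(4)] assms(2) by simp
  then have psd: "strongly_psd m ?S \<longleftrightarrow> strongly_psd m A"
    and pd: "strongly_pd m ?S \<longleftrightarrow> strongly_pd m A"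
    unfolding strongly_psd_def strongly_pd_def by simp_all
  have "m \<ge> 2" and "even (m - 1)" using assms by auto
  have exists: "\<exists>lam. H_eigenvalue m ?S lam" if "strongly_psd m A"
    using H_eigenvalue_exists[OF \<open>m \<ge> 2\<close>] that psd unfolding strongly_psd_def by blast
  show ?thesis
    unfolding genuinely_psd_def genuinely_pd_def Let_def
    using exists psd pd strongly_pd_imp_strongly_psd[OF \<open>m \<ge> 2\<close>]
      strongly_psd_H_eigenvalue_nonneg[OF \<open>even (m - 1)\<close>]
      strongly_pd_H_eigenvalue_pos[OF \<open>even (m - 1)\<close>]
    by blast
qed

end
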